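(* Let $\mathbf i'=\zeta_k\mathbf i$ be a 6-move. The 6-move degree map $\mathbf g'\mapsto\mathbf g$ on $\mathbb Z^{\oplus\mathbb N}$ (defined in the context) sends the cone $C_{\mathbf i'}$ into the cone $C_{\mathbf i}$.
   Context: $\mathfrak g$ is a complex finite-dimensional simple Lie algebra with index set $I$ and Cartan matrix $\mathsf C=(\mathsf c_{i,j})$. $\mathbb N=\{1,2,\dots\}$, $[a]_+=\max(a,0)$. $I^{(\infty)}$: sequences $\mathbf i=(i_u)_{u\in\mathbb N}\in I^{\mathbb N}$ with every element of $I$ occurring infinitely often; $u^-_{\mathbf i}=\max(\{v<u:i_v=i_u\}\cup\{0\})$. A 6-move $\mathbf i'=\zeta_k\mathbf i$: $i_k=i_{k+2}=i_{k+4}=i'_{k+1}=i'_{k+3}=i'_{k+5}$, $i_{k+1}=i_{k+3}=i_{k+5}=i'_k=i'_{k+2}=i'_{k+4}$, $i_u=i'_u$ for $u\notin[k,k+5]$, $\mathsf c_{i_{k+1},i_k}\mathsf c_{i_k,i_{k+1}}=3$. Put $i=i_k$, $j=i_{k+1}$. The 6-move degree map: for $\mathbf g'=(g'_u)$ set $A=g'_{k+2}-\mathsf c_{j,i}[g'_{k+1}]_+$, $B=g'_{k+3}-[-g'_{k+1}]_+$, $C=-g'_{k+1}-\mathsf c_{i,j}[A]_+-[-B]_+$, $D=g'_k+\mathsf c_{j,i}[-g'_{k+1}]_+-2[-A]_++\mathsf c_{j,i}[-C]_+$, $E=-A-\mathsf c_{j,i}[C]_++[D]_+$, $F=-C+\mathsf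 c_{i,j}[-D]_+$, $G=-B-[-C]_++\mathsf c_{i,j}[-E]_++[F]_+$, $H=-D+[E]_++\mathsf c_{j,i}[-F]_+$, $I=-F+[G]_++\mathsf c_{i,j}[-H]_+$; then $g_{k^-_{\mathbf i}}=g'_{(k+1)^-_{\mathbf i'}}+[g'_{k+1}]_++[B]_+-[-G]_+-[-I]_+$ (if $k^-_{\mathbf i}>0$), $g_{(k+1)^-_{\mathbf i}}=g'_{k^-_{\mathbf i'}}+[D]_+-\mathsf c_{j,i}[F]_++2[H]_+-\mathsf c_{j,i}[I]_+$ (if $(k+1)^-_{\mathbf i}>0$), $g_k=-I$, $g_{k+1}=-H+\mathsf c_{j,i}[-I]_+$, $g_{k+2}=-G+[I]_+$, $g_{k+3}=-E+\mathsf c_{j,i}[-G]_++[H]_+$, $g_{k+4}=g'_{k+5}-[-B]_++[G]_+$, $g_{k+5}=g'_{k+4}-[-A]_+-\mathsf c_{j,i}[B]_++[E]_+$, $g_u=g'_u$ otherwise. Cone: $C_{\mathbf i}=\{\mathbf g\in\mathbb Z^{\oplus\mathbb N}:\sum_{v\ge u,\,i_v=i_u}g_v\ge0\ \forall u\in\mathbb N\}$. *)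

theory Defs
  imports Complex_Main
begin

text \<open>Cartan matrix of a complex finite-dimensional simple Lie algebra, i.e. an
indecomposable generalized Cartan matrix of finite type (symmetrizable with
positive definite symmetrization).\<close>
definition simple_cartan_matrix :: "'a set \<Rightarrow> ('a \<Rightarrow> 'a \<Rightarrow> int) \<Rightarrow> bool" where
  "simple_cartan_matrix I C \<longleftrightarrow>
     finite I \<and> I \<noteq> {} \<and>
     (\<forall>i\<in>I. C i i = 2) \<and>
     (\<forall>i\<in>I. \<forall>j\<in>I. i \<noteq> j \<longrightarrow> C i j \<le> 0) \<and>
     (\<forall>i\<in>I. \<forall>j\<in>I. C i j = 0 \<longleftrightarrow> C j i = 0) \<and>
     (\<exists>d :: 'a \<Rightarrow> real. (\<forall>i\<in>I. d i > 0) \<and>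
        (\<forall>i\<in>I. \<forall>j\<in>I. d i * of_int (C i j) = d j * of_int (C j i)) \<and>
        (\<forall>x :: 'a \<Rightarrow> real. (\<exists>i\<in>I. x i \<noteq> 0) \<longrightarrow>
           (\<Sum>i\<in>I. \<Sum>j\<in>I. x i * d i * of_int (C i j) * x j) > 0)) \<and>
     (\<forall>J. J \<subseteq> I \<and> J \<noteq> {} \<and> J \<noteq> I \<longrightarrow> (\<exists>i\<in>J. \<exists>j\<in>I - J. C i j \<noteq> 0))"

text \<open>Sequences \<open>(i_u)_{u \<in> \<nat>}\<close>, \<open>\<nat> = {1,2,...}\<close>, represented as \<open>nat \<Rightarrow> 'a\<close>
(the value at 0 is irrelevant); every element of \<open>I\<close> occurs infinitely often.\<close>
definition inf_seq :: "'a set \<Rightarrow> (nat \<Rightarrow> 'a) \<Rightarrow> bool" where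
  "inf_seq I s \<longleftrightarrow> (\<forall>u\<ge>1. s u \<in> I) \<and> (\<forall>a\<in>I. infinite {u. 1 \<le> u \<and> s u = a})"

definition prev :: "(nat \<Rightarrow> 'a) \<Rightarrow> nat \<Rightarrow> nat" where
  "prev s u = Max ({v. 1 \<le> v \<and> v < u \<and> s v = s u} \<union> {0})"

definition six_move :: "('a \<Rightarrow> 'a \<Rightarrow> int) \<Rightarrow> (nat \<Rightarrow> 'a) \<Rightarrow> (nat \<Rightarrow> 'a) \<Rightarrow> nat \<Rightarrow> bool" where
  "six_move C s s' k \<longleftrightarrow> 1 \<le> k \<and>
     s k = s (k+2) \<and> s (k+2) = s (k+4) \<and> s (k+4) = s' (k+1) \<and>
     s' (k+1) = s' (k+3) \<and> s' (k+3) = s' (k+5) \<and>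
     s (k+1) = s (k+3) \<and> s (k+3) = s (k+5) \<and> s (k+5) = s' k \<and>
     s' k = s' (k+2) \<and> s' (k+2) = s' (k+4) \<and>
     (\<forall>u. 1 \<le> u \<and> (u < k \<or> k + 5 < u) \<longrightarrow> s u = s' u) \<and>
     C (s (k+1)) (s k) * C (s k) (s (k+1)) = 3"

text \<open>\<open>\<int>^{\<oplus>\<nat>}\<close>: finitely supported integer vectors indexed by \<open>\<nat> = {1,2,...}\<close>
(represented as \<open>nat \<Rightarrow> int\<close> vanishing at 0).\<close>
definition fin_vecs :: "(nat \<Rightarrow> int) set" where
  "fin_vecs = {g. g 0 = 0 \<and> finite {u. g u \<noteq> 0}}"

text \<open>The cone \<open>C_s\<close>; the sum over \<open>v \<ge> u, s_v = s_u\<close> is the (finite) sum over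
the support.\<close>
definition cone :: "(nat \<Rightarrow> 'a) \<Rightarrow> (nat \<Rightarrow> int) set" where
  "cone s = {g \<in> fin_vecs. \<forall>u\<ge>1. (\<Sum>v\<in>{v. u \<le> v \<and> s v = s u \<and> g v \<noteq> 0}. g v) \<ge> 0}"

definition pp :: "int \<Rightarrow> int" where "pp x = max x 0"

definition six_deg :: "('a \<Rightarrow> 'a \<Rightarrow> int) \<Rightarrow> (nat \<Rightarrow> 'a) \<Rightarrow> (nat \<Rightarrow> 'a) \<Rightarrow> nat
    \<Rightarrow> (nat \<Rightarrow> int) \<Rightarrow> (nat \<Rightarrow> int)" where
  "six_deg C s s' k g' =
    (let i = s k; j = s (k+1); cji = C j i; cij = C i j;
         A = g' (k+2) - cji * pp (g' (k+1));
         B = g' (k+3) - pp (- g' (k+1));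
         Cc = - g' (k+1) - cij * pp A - pp (-B);
         D = g' k + cji * pp (- g' (k+1)) - 2 * pp (-A) + cji * pp (-Cc);
         E = - A - cji * pp Cc + pp D;
         F = - Cc + cij * pp (-D);
         G = - B - pp (-Cc) + cij * pp (-E) + pp F;
         H = - D + pp E + cji * pp (-F);
         II = - F + pp G + cij * pp (-H);
         p0 = prev s k; p1 = prev s (k+1); q0 = prev s' k; q1 = prev s' (k+1)
     in (\<lambda>u. if u = k then - II
            else if u = k+1 then - H + cji * pp (-II)
            else if u = k+2 then - G + pp II
            else if u = k+3 then - E + cji * pp (-G) + pp H
            else if u = k+4 then g' (k+5) - pp (-B) + pp G
            else if u = k+5 then g' (k+4) - pp (-A) - cji * pp B + pp E
            else if 0 < p0 \<and> u = p0 then g' q1 + pp (g' (k+1)) + pp B - pp (-G) - pp (-II)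
            else if 0 < p1 \<and> u = p1 then g' q0 + pp D - cji * pp F + 2 * pp H - cji * pp II
            else g' u))"

end

theory Submission
  imports Defs
begin

(* The cone condition asks that, for every u, the entries at positions v \<ge> u of the colour
   s_u have nonnegative sum. Beyond position k+5 neither the sequence nor the vector changes,
   so those tail sums are untouched. Inside the window [k, k+5] the six new tail sums are
   piecewise-linear functions of the six old window entries and the two old tails X, Y beyond
   the window; that they are nonnegative whenever the old ones are is a finite case analysis,
   for each of the two possible Cartan pairs (c_ij, c_ji) = (-1,-3), (-3,-1). Below the window
   the map moves an amount d0 (resp. d1) from the colour-i (resp. colour-j) entries of the
   window to position k^- (resp. (k+1)^-), preserving the total of each colour, so the tail
   sums starting below the window do not change either. *)

lemma int_factors_three:
  fixes a b :: int
  assumes "a \<le> 0" "b \<le> 0" "a * b = 3"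
  shows "(a, b) \<in> {(-1, -3), (-3, -1)}"
proof -
  have "a \<le> -1" "b \<le> -1" using assms by (auto simp: order.order_iff_strict)
  have "(-a) * 1 \<le> (-a) * (-b)" using \<open>a \<le> -1\<close> \<open>b \<le> -1\<close> by (intro mult_left_mono) auto
  moreover have "1 * (-b) \<le> (-a) * (-b)" using \<open>a \<le> -1\<close> \<open>b \<le> -1\<close> by (intro mult_right_mono) auto
  ultimately have "a \<in> {-1, -2, -3}" "b \<in> {-1, -2, -3}"
    using assms(3) \<open>a \<le> -1\<close> \<open>b \<le> -1\<close> by auto
  then show ?thesis using assms(3) by auto
qed

lemma pp_diff_pp_uminus: "pp x - pp (- x) = x"
  unfolding pp_def by simp

(* g0..g5 stand for g'_k..g'_{k+5}, n0..n5 for the new entries g_k..g_{k+5}, and d0, d1 for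
   the increments at k^- and (k+1)^-; Cc and II are the paper's C and I. *)
context
  fixes cij cji g0 g1 g2 g3 g4 g5 A B Cc D E F G H II n0 n1 n2 n3 n4 n5 d0 d1 :: int
  assumes cartan: "(cij, cji) \<in> {(-1, -3), (-3, -1)}"
    and A_def: "A = g2 - cji * pp g1"
    and B_def: "B = g3 - pp (- g1)"
    and Cc_def: "Cc = - g1 - cij * pp A - pp (- B)"
    and D_def: "D = g0 + cji * pp (- g1) - 2 * pp (- A) + cji * pp (- Cc)"
    and E_def: "E = - A - cji * pp Cc + pp D"
    and F_def: "F = - Cc + cij * pp (- D)"
    and G_def: "G = - B - pp (- Cc) + cij * pp (- E) + pp F"
    and H_def: "H = - D + pp E + cji * pp (- F)"
    and II_def: "II = - F + pp G + cij * pp (- H)"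
    and n0_def: "n0 = - II"
    and n1_def: "n1 = - H + cji * pp (- II)"
    and n2_def: "n2 = - G + pp II"
    and n3_def: "n3 = - E + cji * pp (- G) + pp H"
    and n4_def: "n4 = g5 - pp (- B) + pp G"
    and n5_def: "n5 = g4 - pp (- A) - cji * pp B + pp E"
    and d0_def: "d0 = pp g1 + pp B - pp (- G) - pp (- II)"
    and d1_def: "d1 = pp D - cji * pp F + 2 * pp H - cji * pp II"
begin

lemma six_window_conservation:
  "d0 + n0 + n2 + n4 = g1 + g3 + g5"
  "d1 + n1 + n3 + n5 = g0 + g2 + g4"
proof -
  note pp_x = pp_diff_pp_uminus[of g1] pp_diff_pp_uminus[of A] pp_diff_pp_uminus[of B]
    pp_diff_pp_uminus[of Cc] pp_diff_pp_uminus[of D] pp_diff_pp_uminus[of E]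
    pp_diff_pp_uminus[of F] pp_diff_pp_uminus[of G] pp_diff_pp_uminus[of H]
    pp_diff_pp_uminus[of II]
  note defs = A_def B_def Cc_def D_def E_def F_def G_def H_def II_def
    n0_def n1_def n2_def n3_def n4_def n5_def d0_def d1_def
  show "d0 + n0 + n2 + n4 = g1 + g3 + g5"
    using B_def n0_def n2_def n4_def d0_def pp_x by linarith
  show "d1 + n1 + n3 + n5 = g0 + g2 + g4"
  proof (cases "cij = -1")
    case True
    with cartan have "cji = -3" by auto
    show ?thesis using defs pp_x unfolding True \<open>cji = -3\<close> by linarith
  next
    case False
    with cartan have "cij = -3" "cji = -1" by auto
    show ?thesis using defs pp_x unfolding \<open>cij = -3\<close> \<open>cji = -1\<close> by linarith
  qed
qed

(* X and Y are the colour-i and colour-j tail sums beyond the window. *)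
lemma six_window_tails_nonneg:
  assumes "0 \<le> X" "0 \<le> Y"
    and "0 \<le> g5 + X" "0 \<le> g3 + g5 + X" "0 \<le> g1 + g3 + g5 + X"
    and "0 \<le> g4 + Y" "0 \<le> g2 + g4 + Y" "0 \<le> g0 + g2 + g4 + Y"
  shows "0 \<le> n4 + X" "0 \<le> n2 + n4 + X" "0 \<le> n0 + n2 + n4 + X"
    and "0 \<le> n5 + Y" "0 \<le> n3 + n5 + Y" "0 \<le> n1 + n3 + n5 + Y"
proof -
  note defs = A_def B_def Cc_def D_def E_def F_def G_def H_def II_def
    n0_def n1_def n2_def n3_def n4_def n5_def
  have "0 \<le> n4 + X \<and> 0 \<le> n2 + n4 + X \<and> 0 \<le> n0 + n2 + n4 + X \<and>
      0 \<le> n5 + Y \<and> 0 \<le> n3 + n5 + Y \<and> 0 \<le> n1 + n3 + n5 + Y" (is ?P)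
  proof (cases "cij = -1")
    case True
    with cartan have "cji = -3" by auto
    show ?P using assms defs unfolding True \<open>cji = -3\<close> pp_def by (intro conjI; smt)
  next
    case False
    with cartan have "cij = -3" "cji = -1" by auto
    show ?P using assms defs unfolding \<open>cij = -3\<close> \<open>cji = -1\<close> pp_def by (intro conjI; smt)
  qed
  then show "0 \<le> n4 + X" "0 \<le> n2 + n4 + X" "0 \<le> n0 + n2 + n4 + X"
    and "0 \<le> n5 + Y" "0 \<le> n3 + n5 + Y" "0 \<le> n1 + n3 + n5 + Y"
    by auto
qed

end

lemma prev_less: "1 \<le> u \<Longrightarrow> prev t u < u"
  and prev_cases: "prev t u = 0 \<or> 1 \<le> prev t u \<and> t (prev t u) = t u"
  and le_prev: "1 \<le> v \<Longrightarrow> v < u \<Longrightarrow> t v = t u \<Longrightarrow> v \<le> prev t u"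
proof -
  let ?S = "{v. 1 \<le> v \<and> v < u \<and> t v = t u} \<union> {0}"
  have fin: "finite ?S" by (rule finite_subset[of _ "{..u}"]) auto
  have mem: "prev t u \<in> ?S" unfolding prev_def by (rule Max_in) (use fin in auto)
  then show "1 \<le> u \<Longrightarrow> prev t u < u" by auto
  from mem show "prev t u = 0 \<or> 1 \<le> prev t u \<and> t (prev t u) = t u" by auto
  show "1 \<le> v \<Longrightarrow> v < u \<Longrightarrow> t v = t u \<Longrightarrow> v \<le> prev t u"
    unfolding prev_def by (rule Max_ge) (use fin in auto)
qed

lemma sum_eq_sum_plus_diff_at:
  fixes f f' :: "'a \<Rightarrow> 'b::ab_group_add"
  assumes "finite A" "a \<in> A" "\<And>x. x \<in> A - {a} \<Longrightarrow> f x = f' x"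
  shows "sum f A = sum f' A + (f a - f' a)"
proof -
  have "sum f (A - {a}) = sum f' (A - {a})" using assms(3) by (rule sum.cong[OF refl])
  then show ?thesis using sum.remove[OF assms(1,2), of f] sum.remove[OF assms(1,2), of f'] by simp
qed

definition tail_sum :: "(nat \<Rightarrow> 'a) \<Rightarrow> (nat \<Rightarrow> int) \<Rightarrow> 'a \<Rightarrow> nat \<Rightarrow> int" where
  "tail_sum t h c u = (\<Sum>v\<in>{v. u \<le> v \<and> t v = c \<and> h v \<noteq> 0}. h v)"

lemma cone_iff_tail_sum:
  "h \<in> cone t \<longleftrightarrow> h \<in> fin_vecs \<and> (\<forall>u\<ge>1. 0 \<le> tail_sum t h (t u) u)"
  unfolding cone_def tail_sum_def by auto

lemma tail_sum_Suc:
  assumes "finite {v. h v \<noteq> 0}"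
  shows "tail_sum t h c u = (if t u = c then h u else 0) + tail_sum t h c (Suc u)"
proof -
  let ?S = "\<lambda>u. {v. u \<le> v \<and> t v = c \<and> h v \<noteq> 0}"
  have fin: "finite (?S (Suc u))" by (rule finite_subset[OF _ assms]) auto
  show ?thesis
  proof (cases "t u = c \<and> h u \<noteq> 0")
    case True
    then have "?S u = insert u (?S (Suc u))" by (auto simp: Suc_le_eq order.order_iff_strict)
    then show ?thesis using True fin unfolding tail_sum_def by simp
  next
    case False
    then have "?S u = ?S (Suc u)" by (auto simp: Suc_le_eq order.order_iff_strict)
    then show ?thesis using False unfolding tail_sum_def by auto
  qed
qed

lemma tail_sum_split:
  assumes "finite {v. h v \<noteq> 0}" "u \<le> b"
  shows "tail_sum t h c u = (\<Sum>v\<in>{u..<b}. if t v = c then h v else 0) + tail_sum t h c b"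
  using assms(2)
proof (induction b rule: dec_induct)
  case (step b)
  then show ?case using tail_sum_Suc[OF assms(1), of t c b] by simp
qed simp

lemma tail_sum_split_offset:
  assumes "finite {v. h v \<noteq> 0}" "m \<le> n"
  shows "tail_sum t h c (k + m)
    = (\<Sum>l\<in>{m..<n}. if t (k + l) = c then h (k + l) else 0) + tail_sum t h c (k + n)"
proof -
  have "{k + m..<k + n} = {m + k..<n + k}" by (simp add: add.commute)
  then show ?thesis
    using tail_sum_split[OF assms(1), of "k + m" "k + n"] assms(2)
    by (simp add: sum.atLeastLessThan_shift_bounds comp_def)
qed

lemma tail_sum_cong:
  assumes "\<And>v. u \<le> v \<Longrightarrow> t v = t' v \<and> (t v = c \<longrightarrow> h v = h' v)"
  shows "tail_sum t h c u = tail_sum t' h' c u"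
proof -
  have "{v. u \<le> v \<and> t v = c \<and> h v \<noteq> 0} = {v. u \<le> v \<and> t' v = c \<and> h' v \<noteq> 0}"
    using assms by force
  then show ?thesis unfolding tail_sum_def by (auto intro!: sum.cong simp: assms)
qed

lemma cone_tail_sum_nonneg:
  assumes "h \<in> cone t" "1 \<le> u"
  shows "0 \<le> tail_sum t h c u"
proof (cases "\<exists>w\<ge>u. t w = c")
  case True
  define w where "w = (LEAST w. u \<le> w \<and> t w = c)"
  have w: "u \<le> w" "t w = c" using LeastI_ex[of "\<lambda>w. u \<le> w \<and> t w = c"] True
    unfolding w_def by auto
  have "t v \<noteq> c" if "u \<le> v" "v < w" for v
    using not_less_Least[of v "\<lambda>w. u \<le> w \<and> t w = c"] that unfolding w_def by auto
  moreover have "finite {v. h v \<noteq> 0}" using assms(1) unfolding cone_def fin_vecs_def by auto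
  ultimately have "tail_sum t h c u = tail_sum t h c w"
    using tail_sum_split[of h u w t c] w by simp
  also have "0 \<le> tail_sum t h c w"
    using assms w unfolding cone_iff_tail_sum by auto
  finally show ?thesis .
next
  case False
  then have "{v. u \<le> v \<and> t v = c \<and> h v \<noteq> 0} = {}" by auto
  then show ?thesis unfolding tail_sum_def by simp
qed

locale six_move_cone =
  fixes C :: "'a \<Rightarrow> 'a \<Rightarrow> int" and s s' :: "nat \<Rightarrow> 'a" and k :: nat and g' :: "nat \<Rightarrow> int"
  assumes move: "six_move C s s' k"
    and cartan_pair: "(C (s k) (s (Suc k)), C (s (Suc k)) (s k)) \<in> {(-1, -3), (-3, -1)}"
    and cone_g': "g' \<in> cone s'"
begin

abbreviation i :: 'a where "i \<equiv> s k"
abbreviation j :: 'a where "j \<equiv> s (Suc k)"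
abbreviation g :: "nat \<Rightarrow> int" where "g \<equiv> six_deg C s s' k g'"

lemma one_le_k: "1 \<le> k"
  using move unfolding six_move_def by simp

lemma colours [simp]:
  "s (k+2) = i" "s (k+4) = i" "s' (Suc k) = i" "s' (k+3) = i" "s' (k+5) = i"
  "s (k+3) = j" "s (k+5) = j" "s' k = j" "s' (k+2) = j" "s' (k+4) = j"
  using move unfolding six_move_def by auto

(* Evaluating sums over intervals such as {2..<6} produces Suc (Suc k) instead of k + 2. *)
lemma colours_Suc_Suc [simp]: "s (Suc (Suc k)) = i" "s' (Suc (Suc k)) = j"
  using colours(1,9) by (simp_all add: numeral_2_eq_2)

lemma colours_distinct [simp]: "i \<noteq> j" "j \<noteq> i"
  using cartan_pair by auto

lemma colours_outside_window: "1 \<le> u \<Longrightarrow> u < k \<or> k + 5 < u \<Longrightarrow> s' u = s u"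
  using move unfolding six_move_def by auto

lemma prev_s': "prev s' (Suc k) = prev s k" "prev s' k = prev s (Suc k)"
proof -
  have "{v. 1 \<le> v \<and> v < Suc k \<and> s' v = s' (Suc k)} = {v. 1 \<le> v \<and> v < k \<and> s v = i}"
    "{v. 1 \<le> v \<and> v < k \<and> s' v = s' k} = {v. 1 \<le> v \<and> v < Suc k \<and> s v = j}"
    using colours_outside_window by (auto simp: less_Suc_eq)
  then show "prev s' (Suc k) = prev s k" "prev s' k = prev s (Suc k)"
    unfolding prev_def by simp_all
qed

lemma prev_below_window: "prev s k < k" "prev s (Suc k) < k"
  using prev_less[OF one_le_k, of s] prev_less[of "Suc k" s] prev_cases[of s "Suc k"]
  by (auto simp: less_Suc_eq)

definition "A = g' (k+2) - C j i * pp (g' (Suc k))"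
definition "B = g' (k+3) - pp (- g' (Suc k))"
definition "Cc = - g' (Suc k) - C i j * pp A - pp (- B)"
definition "D = g' k + C j i * pp (- g' (Suc k)) - 2 * pp (- A)
  + C j i * pp (- Cc)"
definition "E = - A - C j i * pp Cc + pp D"
definition "F = - Cc + C i j * pp (- D)"
definition "G = - B - pp (- Cc) + C i j * pp (- E) + pp F"
definition "H = - D + pp E + C j i * pp (- F)"
definition "II = - F + pp G + C i j * pp (- H)"
definition "d0 = pp (g' (Suc k)) + pp B - pp (- G) - pp (- II)"
definition "d1 = pp D - C j i * pp F + 2 * pp H - C j i * pp II"

lemma six_deg_eq: "g = (\<lambda>u. if u = k then - II
    else if u = Suc k then - H + C j i * pp (- II)
    else if u = k+2 then - G + pp II
    else if u = k+3 then - E + C j i * pp (- G) + pp H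
    else if u = k+4 then g' (k+5) - pp (- B) + pp G
    else if u = k+5 then g' (k+4) - pp (- A) - C j i * pp B + pp E
    else if 0 < prev s k \<and> u = prev s k
      then g' u + d0
    else if 0 < prev s (Suc k) \<and> u = prev s (Suc k)
      then g' u + d1
    else g' u)"
  unfolding six_deg_def Let_def A_def B_def Cc_def D_def E_def F_def G_def H_def II_def d0_def d1_def
  by (auto simp: fun_eq_iff algebra_simps prev_s')
lemma six_deg_window:
  "g k = - II" "g (Suc k) = - H + C j i * pp (- II)" "g (k+2) = - G + pp II"
  "g (k+3) = - E + C j i * pp (- G) + pp H" "g (k+4) = g' (k+5) - pp (- B) + pp G"
  "g (k+5) = g' (k+4) - pp (- A) - C j i * pp B + pp E"
  by (simp_all add: six_deg_eq)

lemma prev_distinct: "0 < prev s k \<Longrightarrow> prev s (Suc k) \<noteq> prev s k"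
  using prev_cases[of s k] prev_cases[of s "Suc k"] by auto

lemma six_deg_prev:
  "0 < prev s k \<Longrightarrow> g (prev s k) = g' (prev s k) + d0"
  "0 < prev s (Suc k) \<Longrightarrow> g (prev s (Suc k)) = g' (prev s (Suc k)) + d1"
  using prev_below_window prev_distinct by (auto simp: six_deg_eq)

lemma six_deg_outside:
  assumes "u < k \<or> k + 5 < u"
    and "0 < prev s k \<longrightarrow> u \<noteq> prev s k" "0 < prev s (Suc k) \<longrightarrow> u \<noteq> prev s (Suc k)"
  shows "g u = g' u"
proof -
  have "u \<noteq> k" "u \<noteq> Suc k" "u \<noteq> Suc (Suc k)" "u \<noteq> k+3" "u \<noteq> k+4" "u \<noteq> k+5"
    using assms(1) by auto
  then show ?thesis using assms(2,3) by (auto simp: six_deg_eq)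
qed

lemma six_deg_conservation:
  "d0 + g k + g (k+2) + g (k+4) = g' (Suc k) + g' (k+3) + g' (k+5)"
  "d1 + g (Suc k) + g (k+3) + g (k+5) = g' k + g' (k+2) + g' (k+4)"
  using six_window_conservation[OF cartan_pair A_def B_def Cc_def D_def E_def F_def G_def H_def
      II_def six_deg_window d0_def d1_def]
  by simp_all

lemma finite_support_g': "finite {u. g' u \<noteq> 0}"
  using cone_g' unfolding cone_def fin_vecs_def by auto

lemma six_deg_fin_vecs: "g \<in> fin_vecs"
proof -
  have "{u. g u \<noteq> 0} \<subseteq> {u. g' u \<noteq> 0} \<union> {k..k+5} \<union> {prev s k, prev s (Suc k)}"
  proof
    fix u assume "u \<in> {u. g u \<noteq> 0}"
    then show "u \<in> {u. g' u \<noteq> 0} \<union> {k..k+5} \<union> {prev s k, prev s (Suc k)}"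
      using six_deg_outside[of u] by (cases "u < k \<or> k + 5 < u") auto
  qed
  then have "finite {u. g u \<noteq> 0}"
    by (rule finite_subset) (simp add: finite_support_g')
  moreover have "g 0 = 0"
    using six_deg_outside[of 0] one_le_k cone_g' unfolding cone_def fin_vecs_def by auto
  ultimately show ?thesis unfolding fin_vecs_def by simp
qed

lemma finite_support_g: "finite {u. g u \<noteq> 0}"
  using six_deg_fin_vecs unfolding fin_vecs_def by simp

lemma tail_sum_above_window:
  "k + 6 \<le> u \<Longrightarrow> tail_sum s g c u = tail_sum s' g' c u"
  using colours_outside_window six_deg_outside prev_below_window
  by (intro tail_sum_cong) auto

lemma tail_sum_window_nonneg:
  assumes "k \<le> u" "u \<le> k + 5"
  shows "0 \<le> tail_sum s g (s u) u"
proof -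
  define X where "X = tail_sum s' g' i (k+6)"
  define Y where "Y = tail_sum s' g' j (k+6)"
  have XY: "tail_sum s g i (k+6) = X" "tail_sum s g j (k+6) = Y" "0 \<le> X" "0 \<le> Y"
    using tail_sum_above_window cone_tail_sum_nonneg[OF cone_g'] one_le_k
    unfolding X_def Y_def by auto
  have old: "0 \<le> (\<Sum>l\<in>{m..<6}. if s' (k + l) = s' (k + m) then g' (k + l) else 0)
      + tail_sum s' g' (s' (k + m)) (k + 6)" if "m \<le> 6" for m
  proof -
    have "0 \<le> tail_sum s' g' (s' (k + m)) (k + m)"
      using cone_tail_sum_nonneg[OF cone_g'] one_le_k by simp
    then show ?thesis
      using tail_sum_split_offset[OF finite_support_g' that, of s' "s' (k + m)" k] by simp
  qed
  from old[of 5] old[of 3] old[of 1] old[of 4] old[of 2] old[of 0]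
  have "0 \<le> g' (k+5) + X" "0 \<le> g' (k+3) + g' (k+5) + X"
    "0 \<le> g' (Suc k) + g' (k+3) + g' (k+5) + X"
    "0 \<le> g' (k+4) + Y" "0 \<le> g' (k+2) + g' (k+4) + Y" "0 \<le> g' k + g' (k+2) + g' (k+4) + Y"
    unfolding X_def Y_def by (simp_all add: atLeastLessThan_nat_numeral)
  note new = six_window_tails_nonneg[OF cartan_pair A_def B_def Cc_def D_def E_def F_def G_def
      H_def II_def six_deg_window d0_def d1_def XY(3,4) this]
  obtain m where "u = k + m" "m \<le> 5" using assms le_Suc_ex by force
  moreover have "tail_sum s g (s (k + m)) (k + m) = (\<Sum>l\<in>{m..<6}. if s (k + l) = s (k + m) then g (k + l) else 0)
      + tail_sum s g (s (k + m)) (k + 6)"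
    using finite_support_g \<open>m \<le> 5\<close> by (intro tail_sum_split_offset) simp_all
  moreover have "m = 0 \<or> m = 1 \<or> m = 2 \<or> m = 3 \<or> m = 4 \<or> m = 5"
    using \<open>m \<le> 5\<close> by auto
  ultimately show ?thesis using new XY(1,2)
    by (elim disjE) (simp_all add: atLeastLessThan_nat_numeral)
qed

lemma tail_sum_at_window:
  "tail_sum s g c k = (if c = i then g k + g (k+2) + g (k+4) else 0)
    + (if c = j then g (Suc k) + g (k+3) + g (k+5) else 0) + tail_sum s' g' c (k + 6)"
  "tail_sum s' g' c k = (if c = i then g' (Suc k) + g' (k+3) + g' (k+5) else 0)
    + (if c = j then g' k + g' (k+2) + g' (k+4) else 0) + tail_sum s' g' c (k + 6)"
  using tail_sum_split_offset[OF finite_support_g, of 0 6 s c k]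
    tail_sum_split_offset[OF finite_support_g', of 0 6 s' c k] tail_sum_above_window
  by (auto simp: atLeastLessThan_nat_numeral)

lemma sum_below_window:
  assumes "1 \<le> u" "u < k"
  shows "(\<Sum>v\<in>{u..<k}. if s v = s u then g v else 0)
    = (\<Sum>v\<in>{u..<k}. if s' v = s u then g' v else 0)
      + (if s u = i then d0 else 0) + (if s u = j then d1 else 0)"
proof -
  define L where "L h = (\<Sum>v\<in>{u..<k}. if s v = s u then h v else 0)" for h :: "nat \<Rightarrow> int"
  have "(\<Sum>v\<in>{u..<k}. if s' v = s u then g' v else 0) = L g'"
    unfolding L_def using colours_outside_window assms(1) by (intro sum.cong) auto
  moreover have L_shift: "L g = L g' + d" if "p \<in> {u..<k}" "s p = s u" "g p = g' p + d"
      "\<And>v. v \<in> {u..<k} - {p} \<Longrightarrow> s v = s u \<Longrightarrow> g v = g' v" for p d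
  proof -
    have "L g = L g' + ((if s p = s u then g p else 0) - (if s p = s u then g' p else 0))"
      unfolding L_def by (rule sum_eq_sum_plus_diff_at) (use that in auto)
    then show ?thesis using that by simp
  qed
  moreover consider "s u = i" | "s u = j" | "s u \<noteq> i" "s u \<noteq> j" by blast
  then have "L g = L g' + (if s u = i then d0 else 0) + (if s u = j then d1 else 0)"
  proof cases
    case 1
    then have "u \<le> prev s k" using le_prev[of u k s] assms by simp
    then show ?thesis
      using assms 1 prev_below_window prev_cases[of s k] prev_cases[of s "Suc k"] six_deg_prev(1)
      by (simp, intro L_shift[of "prev s k"] six_deg_outside) auto
  next
    case 2
    then have "u \<le> prev s (Suc k)" using le_prev[of u "Suc k" s] assms by simp
    then show ?thesis
      using assms 2 prev_below_window prev_cases[of s k] prev_cases[of s "Suc k"] six_deg_prev(2)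
      by (simp, intro L_shift[of "prev s (Suc k)"] six_deg_outside) auto
  next
    case 3
    then show ?thesis
      unfolding L_def using prev_cases[of s k] prev_cases[of s "Suc k"] assms
      by (simp, intro sum.cong refl) (auto intro!: six_deg_outside)
  qed
  ultimately show ?thesis unfolding L_def by simp
qed

lemma tail_sum_below_window:
  assumes "1 \<le> u" "u < k"
  shows "tail_sum s g (s u) u = tail_sum s' g' (s u) u"
proof -
  have "tail_sum s g (s u) u = (\<Sum>v\<in>{u..<k}. if s v = s u then g v else 0) + tail_sum s g (s u) k"
    "tail_sum s' g' (s u) u = (\<Sum>v\<in>{u..<k}. if s' v = s u then g' v else 0) + tail_sum s' g' (s u) k"
    using tail_sum_split[OF finite_support_g, of u k s "s u"]
      tail_sum_split[OF finite_support_g', of u k s' "s u"] assms by simp_all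
  then show ?thesis
    using sum_below_window[OF assms] tail_sum_at_window[of "s u"] six_deg_conservation
    by auto
qed

theorem six_deg_in_cone: "g \<in> cone s"
  unfolding cone_iff_tail_sum
proof (intro conjI six_deg_fin_vecs allI impI)
  fix u :: nat assume "1 \<le> u"
  consider "u < k" | "k \<le> u" "u \<le> k + 5" | "k + 6 \<le> u" by linarith
  then show "0 \<le> tail_sum s g (s u) u"
  proof cases
    case 1
    then show ?thesis
      using tail_sum_below_window cone_tail_sum_nonneg[OF cone_g'] \<open>1 \<le> u\<close> by simp
  next
    case 2
    then show ?thesis by (rule tail_sum_window_nonneg)
  next
    case 3
    then show ?thesis
      using tail_sum_above_window cone_tail_sum_nonneg[OF cone_g'] \<open>1 \<le> u\<close> by simp
  qed
qed

end

theorem lemma3p14: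
  fixes I :: "'a set" and C :: "'a \<Rightarrow> 'a \<Rightarrow> int"
    and s s' :: "nat \<Rightarrow> 'a" and k :: nat and g' :: "nat \<Rightarrow> int"
  assumes "simple_cartan_matrix I C"
    and "inf_seq I s" and "inf_seq I s'"
    and "six_move C s s' k"
    and "g' \<in> cone s'"
  shows "six_deg C s s' k g' \<in> cone s"
proof -
  have "1 \<le> k" and product: "C (s (Suc k)) (s k) * C (s k) (s (Suc k)) = 3"
    using assms(4) unfolding six_move_def Suc_eq_plus1 by blast+
  then have in_I: "s k \<in> I" "s (Suc k) \<in> I"
    using assms(2) unfolding inf_seq_def by auto
  have "s k \<noteq> s (Suc k)"
    using assms(1) in_I product unfolding simple_cartan_matrix_def by force
  then have "C (s k) (s (Suc k)) \<le> 0" "C (s (Suc k)) (s k) \<le> 0"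
    using assms(1) in_I unfolding simple_cartan_matrix_def by auto
  then have "(C (s k) (s (Suc k)), C (s (Suc k)) (s k)) \<in> {(-1, -3), (-3, -1)}"
    using product by (intro int_factors_three) (simp_all add: mult.commute)
  then interpret six_move_cone C s s' k g'
    using assms(4,5) by unfold_locales
  show ?thesis by (rule six_deg_in_cone)
qed

end
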